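(* Let $r \in \mathbb{Z}_{\geqslant 2}$. For any real $x \geqslant 1$, \begin{align*} \sum_{1 \leqslant n_1 < \dotsb < n_r \leqslant x} \mu \left( n_1 \dotsb n_r \right) \left \lfloor \frac{x}{n_1 \dotsb n_r} \right \rfloor &= \frac{1}{r!} \sum_{n_1 ,\dotsc ,n_r \leqslant x} \mu \left( n_1 \dotsb n_r \right) \left \lfloor \frac{x}{n_1 \dotsb n_r} \right \rfloor \\ &\quad - \frac{1}{r!}\sum_{j=2}^{r-2} (-1)^j (j-1) \binom{r}{j} \sum_{n \leqslant x} (1-r+j)^{\omega(n)} - \frac{(-1)^r \lfloor x \rfloor}{r(r-2)!} + \frac{(-1)^{r}(r-2)}{(r-1)!}. \end{align*}
   Context: $\mu$ is the Möbius function, $\lfloor\cdot\rfloor$ the integer part, and $\omega(n)$ the number of distinct prime factors of $n$. The first sum on the right runs over all $r$-tuples of positive integers at most $x$; an empty sum (e.g. over $j$ when $r<4$) is $0$. *)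

theory Defs
  imports "HOL-Analysis.Analysis" "HOL-Computational_Algebra.Squarefree"
begin

definition moebius_mu :: "nat \<Rightarrow> int" where
  "moebius_mu n = (if n = 0 \<or> \<not> squarefree n then 0 else (-1) ^ card (prime_factors n))"

definition omega :: "nat \<Rightarrow> nat" where
  "omega n = card (prime_factors n)"

end

theory Submission
  imports Defs "HOL-Combinatorics.Permutations"
begin

text \<open>
  Sorting a tuple of distinct entries shows that the sum over increasing tuples is \<open>1/r!\<close>
  times the sum over injective tuples. Writing \<open>\<lfloor>x/d\<rfloor>\<close> as the number of multiples of
  \<open>d\<close> up to \<open>x\<close> turns both sums into \<open>\<Sum>\<^sub>m\<^sub>\<le>\<^sub>x\<close> of the sum of
  \<open>\<mu>(n\<^sub>1\<cdots>n\<^sub>r)\<close> over tuples with \<open>n\<^sub>1\<cdots>n\<^sub>r | m\<close>. A tuple with squarefree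
  product dividing \<open>m\<close> is the same as a colouring of the prime factors of \<open>m\<close> by
  \<open>0..r\<close> (colour \<open>i+1\<close>: the prime divides \<open>n\<^sub>i\<close>; colour \<open>0\<close>: it divides no
  entry), and \<open>\<mu>\<close> of the product is the product over the primes of \<open>1\<close> for colour
  \<open>0\<close> and \<open>-1\<close> otherwise. Over all tuples this gives \<open>(1-r)\<^bsup>\<omega>(m)\<^esup>\<close>. A tuple
  is injective iff at most one colour in \<open>1..r\<close> is unused (unused colours are entries
  equal to \<open>1\<close>); inclusion-exclusion over the set \<open>J\<close> of unused colours with
  weights \<open>(-1)\<^bsup>|J|\<^esup>(1-|J|)\<close> yields
  \<open>\<Sum>\<^sub>j (r choose j)(-1)\<^sup>j(1-j)(1-r+j)\<^bsup>\<omega>(m)\<^esup>\<close>. Summed over \<open>m\<close>, the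
  terms \<open>j = 0, r-1, r\<close> are the sum over all tuples, a constant and a multiple of
  \<open>\<lfloor>x\<rfloor>\<close>.
\<close>

lemma sum_Pow_card:
  fixes h :: "nat \<Rightarrow> 'a::comm_semiring_1"
  assumes "finite S"
  shows "(\<Sum>J\<in>Pow S. h (card J)) = (\<Sum>j\<le>card S. of_nat (card S choose j) * h j)"
proof -
  have "(\<Sum>J\<in>Pow S. h (card J)) = (\<Sum>j\<le>card S. \<Sum>J\<in>{J \<in> Pow S. card J = j}. h (card J))"
    by (rule sum.group[symmetric]) (use assms in \<open>auto simp: card_mono\<close>)
  also have "\<dots> = (\<Sum>j\<le>card S. of_nat (card S choose j) * h j)"
  proof (rule sum.cong[OF refl])
    fix j
    have "{J \<in> Pow S. card J = j} = {J. J \<subseteq> S \<and> card J = j}" by auto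
    then show "(\<Sum>J\<in>{J \<in> Pow S. card J = j}. h (card J)) = of_nat (card S choose j) * h j"
      using n_subsets[OF assms, of j] by simp
  qed
  finally show ?thesis .
qed

lemma sum_Pow_alternating_one_minus_card:
  assumes "finite M"
  shows "(\<Sum>J\<in>Pow M. (-1) ^ card J * (1 - of_nat (card J)) :: 'a::comm_ring_1)
       = (if card M \<le> 1 then 1 else 0)"
proof -
  have "(\<Sum>J\<in>Pow M. (-1) ^ card J * (1 - of_nat (card J)) :: 'a)
      = (\<Sum>j\<le>card M. of_nat (card M choose j) * ((-1) ^ j * (1 - of_nat j)))"
    by (rule sum_Pow_card[OF assms])
  also have "\<dots> = (\<Sum>j\<le>card M. (-1) ^ j * of_nat (card M choose j))
      - (\<Sum>j\<le>card M. (-1) ^ j * of_nat j * of_nat (card M choose j))"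
    by (simp add: sum_subtractf[symmetric] algebra_simps)
  also have "\<dots> = (if card M \<le> 1 then 1 else 0)"
    using choose_alternating_sum[of "card M", where 'a='a]
      choose_alternating_linear_sum[of "card M", where 'a='a]
    by (cases "card M") (auto simp: le_Suc_eq)
  finally show ?thesis .
qed

lemma strict_mono_on_lessThan_unique:
  fixes s s' :: "nat \<Rightarrow> 'a::linorder"
  assumes "strict_mono_on {..<r} s" "strict_mono_on {..<r} s'"
    and "s ` {..<r} = s' ` {..<r}" and "i < r"
  shows "s i = s' i"
proof -
  have list: "sorted (map f [0..<r]) \<and> distinct (map f [0..<r]) \<and> set (map f [0..<r]) = f ` {..<r}"
    if "strict_mono_on {..<r} f" for f :: "nat \<Rightarrow> 'a"
  proof -
    have "sorted_wrt (<) (map f [0..<r])"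
      unfolding sorted_wrt_iff_nth_less using that by (auto intro: strict_mono_onD)
    then show ?thesis by (auto simp: strict_sorted_iff atLeast0LessThan)
  qed
  have "map s [0..<r] = map s' [0..<r]"
    using list[OF assms(1)] list[OF assms(2)] assms(3) by (intro sorted_distinct_set_unique) auto
  then show ?thesis
    using assms(4) by (metis add_0 diff_zero nth_map_upt)
qed

lemma inj_tuple_sort:
  fixes r :: nat and t :: "nat \<Rightarrow> 'a::linorder"
  assumes t: "t \<in> {..<r} \<rightarrow>\<^sub>E A" and inj: "inj_on t {..<r}"
  obtains s p where "s \<in> {..<r} \<rightarrow>\<^sub>E A" "strict_mono_on {..<r} s" "p permutes {..<r}" "t = s \<circ> p"
proof -
  define xs where "xs = sorted_list_of_set (t ` {..<r})"
  have len: "length xs = r" using card_image[OF inj] by (simp add: xs_def)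
  define s where "s = (\<lambda>i\<in>{..<r}. xs ! i)"
  have "sorted_wrt (<) xs" by (simp add: xs_def)
  then have mono: "strict_mono_on {..<r} s"
    using len by (auto intro!: strict_mono_onI simp: s_def sorted_wrt_iff_nth_less)
  have img: "s ` {..<r} = t ` {..<r}"
  proof -
    have "s ` {..<r} = set xs" using len by (auto simp: s_def in_set_conv_nth)
    then show ?thesis by (simp add: xs_def)
  qed
  have "s ` {..<r} \<subseteq> A"
    using img t by auto
  then have s: "s \<in> {..<r} \<rightarrow>\<^sub>E A"
    by (auto simp: s_def)
  have bij_s: "bij_betw s {..<r} (t ` {..<r})"
    using img strict_mono_on_imp_inj_on[OF mono] by (simp add: bij_betw_def)
  define p where "p i = (if i < r then inv_into {..<r} s (t i) else i)" for i
  have "bij_betw (inv_into {..<r} s \<circ> t) {..<r} {..<r}"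
    using bij_betw_trans[OF bij_betw_imageI[OF inj refl] bij_betw_inv_into[OF bij_s]] .
  then have "bij_betw p {..<r} {..<r}"
    by (rule bij_betw_cong[THEN iffD1, rotated]) (auto simp: p_def)
  then have p: "p permutes {..<r}"
    by (rule bij_imp_permutes) (auto simp: p_def)
  have "t = s \<circ> p"
  proof
    fix i
    show "t i = (s \<circ> p) i"
    proof (cases "i < r")
      case True
      then have "t i \<in> s ` {..<r}" unfolding img by simp
      then show ?thesis using True by (simp add: p_def f_inv_into_f)
    qed (use t in \<open>auto simp: p_def s_def\<close>)
  qed
  then show ?thesis using that s mono p by blast
qed

lemma comp_permutes_in_inj_tuples:
  fixes r :: nat
  assumes s: "s \<in> {..<r} \<rightarrow>\<^sub>E A" "inj_on s {..<r}" and p: "p permutes {..<r}"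
  shows "s \<circ> p \<in> {..<r} \<rightarrow>\<^sub>E A" "inj_on (s \<circ> p) {..<r}"
proof -
  show "s \<circ> p \<in> {..<r} \<rightarrow>\<^sub>E A"
  proof (rule PiE_I)
    show "(s \<circ> p) i \<in> A" if "i \<in> {..<r}" for i
      using that s(1) permutes_in_image[OF p] by auto
    show "(s \<circ> p) i = undefined" if "i \<notin> {..<r}" for i
      using that s(1) permutes_not_in[OF p] by auto
  qed
  show "inj_on (s \<circ> p) {..<r}"
    using permutes_inj_on[OF p] s(2) permutes_image[OF p] by (intro comp_inj_on) auto
qed

lemma strict_mono_comp_permutes_eqD:
  fixes r :: nat and s s' :: "nat \<Rightarrow> 'a::linorder"
  assumes s: "s \<in> {..<r} \<rightarrow>\<^sub>E A" "strict_mono_on {..<r} s" and p: "p permutes {..<r}"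
    and s': "s' \<in> {..<r} \<rightarrow>\<^sub>E A" "strict_mono_on {..<r} s'" and p': "p' permutes {..<r}"
    and eq: "s \<circ> p = s' \<circ> p'"
  shows "s = s'" "p = p'"
proof -
  have "s ` {..<r} = s' ` {..<r}"
    using arg_cong[OF eq, of "\<lambda>f. f ` {..<r}"]
    by (simp only: image_comp[symmetric] permutes_image[OF p] permutes_image[OF p'])
  then show "s = s'"
    using strict_mono_on_lessThan_unique[OF s(2) s'(2)] by (intro PiE_ext[OF s(1) s'(1)]) auto
  show "p = p'"
  proof
    fix i
    show "p i = p' i"
    proof (cases "i < r")
      case True
      then have "p i < r" "p' i < r"
        using permutes_in_image[OF p] permutes_in_image[OF p'] by auto
      moreover have "s (p i) = s (p' i)" using fun_cong[OF eq, of i] \<open>s = s'\<close> by simp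
      ultimately show ?thesis
        using strict_mono_on_imp_inj_on[OF s(2)] by (auto dest: inj_onD)
    qed (use permutes_not_in[OF p] permutes_not_in[OF p'] in auto)
  qed
qed

lemma bij_betw_strict_mono_permutes_inj_tuples:
  fixes r :: nat and A :: "'a::linorder set"
  shows "bij_betw (\<lambda>(s, p). s \<circ> p)
           ({s \<in> {..<r} \<rightarrow>\<^sub>E A. strict_mono_on {..<r} s} \<times> {p. p permutes {..<r}})
           {t \<in> {..<r} \<rightarrow>\<^sub>E A. inj_on t {..<r}}"
proof (rule bij_betw_imageI)
  show "inj_on (\<lambda>(s, p). s \<circ> p)
          ({s \<in> {..<r} \<rightarrow>\<^sub>E A. strict_mono_on {..<r} s} \<times> {p. p permutes {..<r}})"
  proof (rule inj_onI, clarify)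
    fix s p s' p'
    assume "s \<in> {..<r} \<rightarrow>\<^sub>E A" "strict_mono_on {..<r} s" "p permutes {..<r}"
      "s' \<in> {..<r} \<rightarrow>\<^sub>E A" "strict_mono_on {..<r} s'" "p' permutes {..<r}" "s \<circ> p = s' \<circ> p'"
    from strict_mono_comp_permutes_eqD[OF this] show "s = s' \<and> p = p'" ..
  qed
  show "(\<lambda>(s, p). s \<circ> p) `
      ({s \<in> {..<r} \<rightarrow>\<^sub>E A. strict_mono_on {..<r} s} \<times> {p. p permutes {..<r}})
      = {t \<in> {..<r} \<rightarrow>\<^sub>E A. inj_on t {..<r}}"
  proof
    show "(\<lambda>(s, p). s \<circ> p) `
      ({s \<in> {..<r} \<rightarrow>\<^sub>E A. strict_mono_on {..<r} s} \<times> {p. p permutes {..<r}})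
      \<subseteq> {t \<in> {..<r} \<rightarrow>\<^sub>E A. inj_on t {..<r}}"
    proof clarify
      fix s p
      assume "s \<in> {..<r} \<rightarrow>\<^sub>E A" "strict_mono_on {..<r} s" "p permutes {..<r}"
      from comp_permutes_in_inj_tuples[OF this(1) strict_mono_on_imp_inj_on[OF this(2)] this(3)]
      show "s \<circ> p \<in> {..<r} \<rightarrow>\<^sub>E A \<and> inj_on (s \<circ> p) {..<r}" ..
    qed
    show "{t \<in> {..<r} \<rightarrow>\<^sub>E A. inj_on t {..<r}} \<subseteq> (\<lambda>(s, p). s \<circ> p) `
      ({s \<in> {..<r} \<rightarrow>\<^sub>E A. strict_mono_on {..<r} s} \<times> {p. p permutes {..<r}})"
    proof
      fix t
      assume "t \<in> {t \<in> {..<r} \<rightarrow>\<^sub>E A. inj_on t {..<r}}"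
      then obtain s p where "s \<in> {..<r} \<rightarrow>\<^sub>E A" "strict_mono_on {..<r} s" "p permutes {..<r}" "t = s \<circ> p"
        using inj_tuple_sort by blast
      then show "t \<in> (\<lambda>(s, p). s \<circ> p) `
        ({s \<in> {..<r} \<rightarrow>\<^sub>E A. strict_mono_on {..<r} s} \<times> {p. p permutes {..<r}})"
        by (auto intro!: image_eqI[where x = "(s, p)"])
    qed
  qed
qed

lemma sum_inj_tuples_eq_fact_sum_strict_mono:
  fixes r :: nat and A :: "'a::linorder set" and f :: "(nat \<Rightarrow> 'a) \<Rightarrow> 'b::{comm_semiring_1,semiring_char_0}"
  assumes symmetric: "\<And>t p. p permutes {..<r} \<Longrightarrow> f (t \<circ> p) = f t"
  shows "(\<Sum>t \<in> {t \<in> {..<r} \<rightarrow>\<^sub>E A. inj_on t {..<r}}. f t)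
       = fact r * (\<Sum>s \<in> {s \<in> {..<r} \<rightarrow>\<^sub>E A. strict_mono_on {..<r} s}. f s)"
proof -
  let ?S = "{s \<in> {..<r} \<rightarrow>\<^sub>E A. strict_mono_on {..<r} s}"
  let ?P = "{p. p permutes {..<r}}"
  have "(\<Sum>t \<in> {t \<in> {..<r} \<rightarrow>\<^sub>E A. inj_on t {..<r}}. f t) = (\<Sum>(s, p) \<in> ?S \<times> ?P. f (s \<circ> p))"
    using sum.reindex_bij_betw[OF bij_betw_strict_mono_permutes_inj_tuples, of f]
    by (simp add: case_prod_unfold)
  also have "\<dots> = (\<Sum>s \<in> ?S. \<Sum>p \<in> ?P. f (s \<circ> p))"
    by (rule sum.cartesian_product[symmetric])
  also have "\<dots> = (\<Sum>s \<in> ?S. \<Sum>p \<in> ?P. f s)"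
    using symmetric by (intro sum.cong) auto
  also have "\<dots> = fact r * (\<Sum>s \<in> ?S. f s)"
    by (simp add: card_permutations[of "{..<r}" r] sum_distrib_left)
  finally show ?thesis .
qed

lemma prime_factors_prod_primes:
  assumes "finite S" "\<And>p. p \<in> S \<Longrightarrow> prime (p::nat)"
  shows "prime_factors (\<Prod>S) = S"
proof -
  have "0 \<notin> id ` S" by (metis assms(2) id_apply image_iff not_prime_0)
  then show ?thesis
    using prime_factors_prod[OF assms(1), of id] assms(2) by (auto simp: prime_factorization_prime)
qed

lemma squarefree_prod_primes:
  assumes "\<And>p. p \<in> S \<Longrightarrow> prime (p::nat)"
  shows "squarefree (\<Prod>S)"
  using assms by (intro squarefree_prod_coprime) (auto simp: primes_coprime squarefree_prime)

lemma moebius_mu_prod_primes: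
  assumes "finite S" "\<And>p. p \<in> S \<Longrightarrow> prime (p::nat)"
  shows "moebius_mu (\<Prod>S) = (-1) ^ card S"
proof -
  have "\<Prod>S \<noteq> 0" using assms by (metis not_prime_0 prod_zero_iff)
  then show ?thesis
    using prime_factors_prod_primes[OF assms] squarefree_prod_primes[OF assms(2)]
    by (simp add: moebius_mu_def)
qed

lemma prod_dvd_if_subset_prime_factors:
  assumes "finite S" "S \<subseteq> prime_factors (k::nat)"
  shows "\<Prod>S dvd k"
  using assms
proof (induction S rule: finite_induct)
  case (insert p S)
  have "coprime p (\<Prod>S)"
    using insert by (intro prod_coprime_right) (auto intro: primes_coprime simp: prime_factors_dvd)
  moreover have "p dvd k" using insert.prems by auto
  ultimately show ?case using insert by (simp add: divides_mult)
qed simp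

lemma prod_prime_factors_squarefree:
  assumes "squarefree (n::nat)"
  shows "\<Prod>(prime_factors n) = n"
proof -
  have "n \<noteq> 0" using assms by (metis not_squarefree_0)
  then have "(\<Prod>p \<in> prime_factors n. p ^ multiplicity p n) = n"
    using prod_prime_factors[of n] by simp
  moreover have "(\<Prod>p \<in> prime_factors n. p ^ multiplicity p n) = \<Prod>(prime_factors n)"
    using assms squarefree_factorial_semiring'[OF \<open>n \<noteq> 0\<close>] by (intro prod.cong) auto
  ultimately show ?thesis by simp
qed

lemma squarefree_prod_prime_dvd_unique:
  fixes t :: "'a \<Rightarrow> 'b::factorial_semiring"
  assumes "squarefree (\<Prod>i\<in>I. t i)" "finite I" "i \<in> I" "j \<in> I"
    and "prime p" "p dvd t i" "p dvd t j"
  shows "i = j"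
proof (rule ccontr)
  assume "i \<noteq> j"
  then have "(\<Prod>l\<in>{i, j}. t l) dvd (\<Prod>l\<in>I. t l)"
    using assms(2-4) by (intro prod_dvd_prod_subset) auto
  moreover have "p ^ 2 dvd (\<Prod>l\<in>{i, j}. t l)"
    using \<open>i \<noteq> j\<close> assms(6,7) by (simp add: power2_eq_square mult_dvd_mono)
  ultimately have "p dvd 1"
    using assms(1) squarefreeD dvd_trans by blast
  then show False using assms(5) by simp
qed

lemma floor_divide_eq_card_multiples:
  assumes "x \<ge> 0" "d > 0"
  shows "\<lfloor>x / real d\<rfloor> = int (card {k \<in> {1..nat \<lfloor>x\<rfloor>}. d dvd k})"
proof -
  define N where "N = nat \<lfloor>x\<rfloor>"
  have "\<lfloor>x / real d\<rfloor> = \<lfloor>x\<rfloor> div int d"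
    using floor_divide_real_eq_div[of "int d" x] by simp
  also have "\<dots> = int (N div d)"
    using assms by (simp add: N_def zdiv_int)
  finally have "\<lfloor>x / real d\<rfloor> = int (N div d)" .
  moreover have "{k \<in> {1..N}. d dvd k} = (\<lambda>j. d * j) ` {1..N div d}"
    using assms(2) by (auto simp: dvd_def less_eq_div_iff_mult_less_eq mult.commute)
  then have "card {k \<in> {1..N}. d dvd k} = N div d"
    using assms by (simp add: card_image inj_on_def)
  ultimately show ?thesis by (simp add: N_def)
qed

lemma sum_floor_divide_eq_sum_multiples:
  fixes d :: "'a \<Rightarrow> nat" and f :: "'a \<Rightarrow> real"
  assumes "finite T" "x \<ge> 0" "\<And>t. t \<in> T \<Longrightarrow> d t > 0"
  shows "(\<Sum>t\<in>T. f t * \<lfloor>x / real (d t)\<rfloor>)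
       = (\<Sum>k = 1..nat \<lfloor>x\<rfloor>. \<Sum>t\<in>T. if d t dvd k then f t else 0)"
proof -
  have "(\<Sum>t\<in>T. f t * \<lfloor>x / real (d t)\<rfloor>)
      = (\<Sum>t\<in>T. \<Sum>k = 1..nat \<lfloor>x\<rfloor>. if d t dvd k then f t else 0)"
    using assms by (intro sum.cong) (simp_all add: floor_divide_eq_card_multiples sum.If_cases Int_def)
  also have "\<dots> = (\<Sum>k = 1..nat \<lfloor>x\<rfloor>. \<Sum>t\<in>T. if d t dvd k then f t else 0)"
    by (rule sum.swap)
  finally show ?thesis .
qed

text \<open>A colouring \<open>g\<close> of a set \<open>P\<close> of primes by \<open>0..r\<close> encodes the tuple whose entry
  \<open>i\<close> is the product of the primes of colour \<open>i + 1\<close>; \<open>colouring_of\<close> inverts this on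
  tuples with squarefree product.\<close>

definition colour_prods :: "nat \<Rightarrow> nat set \<Rightarrow> (nat \<Rightarrow> nat) \<Rightarrow> nat \<Rightarrow> nat" where
  "colour_prods r P g = (\<lambda>i\<in>{..<r}. \<Prod>{p \<in> P. g p = Suc i})"

definition colouring_of :: "nat \<Rightarrow> nat set \<Rightarrow> (nat \<Rightarrow> nat) \<Rightarrow> nat \<Rightarrow> nat" where
  "colouring_of r P t =
     (\<lambda>p\<in>P. if \<exists>i<r. p dvd t i then Suc (THE i. i < r \<and> p dvd t i) else 0)"

definition squarefree_dvd_tuples :: "nat \<Rightarrow> nat \<Rightarrow> (nat \<Rightarrow> nat) set" where
  "squarefree_dvd_tuples r k =
     {t \<in> {..<r} \<rightarrow>\<^sub>E UNIV. squarefree (\<Prod>i<r. t i) \<and> (\<Prod>i<r. t i) dvd k}"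

lemma prime_dvd_colour_prods_iff:
  assumes "finite P" "\<And>q. q \<in> P \<Longrightarrow> prime q" "p \<in> P" "i < r"
  shows "p dvd colour_prods r P g i \<longleftrightarrow> g p = Suc i"
proof -
  let ?S = "{q \<in> P. g q = Suc i}"
  have fin: "finite ?S" and primes: "\<And>q. q \<in> ?S \<Longrightarrow> prime q"
    using assms(1,2) by auto
  have "0 \<notin> ?S" using primes[of 0] by auto
  then have "\<Prod>?S \<noteq> 0" using fin by simp
  then have "p dvd \<Prod>?S \<longleftrightarrow> p \<in> prime_factors (\<Prod>?S)"
    using assms(2,3) by (simp add: in_prime_factors_iff)
  also have "\<dots> \<longleftrightarrow> g p = Suc i"
    using prime_factors_prod_primes[OF fin primes] assms(3) by simp
  finally show ?thesis
    using assms(4) by (simp add: colour_prods_def)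
qed

lemma prod_colour_prods:
  assumes "finite P" "g \<in> P \<rightarrow> {0..r}"
  shows "(\<Prod>i<r. colour_prods r P g i) = \<Prod>{p \<in> P. g p \<noteq> 0}"
proof -
  have "(\<Prod>i<r. colour_prods r P g i) = (\<Prod>i<r. \<Prod>{p \<in> {p \<in> P. g p \<noteq> 0}. g p - 1 = i})"
    by (intro prod.cong refl) (auto simp: colour_prods_def intro!: arg_cong[where f = Prod])
  also have "\<dots> = \<Prod>{p \<in> P. g p \<noteq> 0}"
    using assms by (intro prod.group) (auto simp: Pi_iff)
  finally show ?thesis .
qed

lemma colour_prods_in_squarefree_dvd_tuples:
  assumes "k > 0" "g \<in> prime_factors k \<rightarrow> {0..r}"
  shows "colour_prods r (prime_factors k) g \<in> squarefree_dvd_tuples r k"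
proof -
  have "\<Prod>{p \<in> prime_factors k. g p \<noteq> 0} dvd k"
    by (rule prod_dvd_if_subset_prime_factors) auto
  moreover have "squarefree (\<Prod>{p \<in> prime_factors k. g p \<noteq> 0})"
    by (rule squarefree_prod_primes) auto
  ultimately show ?thesis
    using prod_colour_prods[OF _ assms(2)] by (simp add: squarefree_dvd_tuples_def colour_prods_def)
qed

lemma colouring_of_colour_prods:
  assumes "finite P" "\<And>p. p \<in> P \<Longrightarrow> prime p" "g \<in> P \<rightarrow>\<^sub>E {0..r}"
  shows "colouring_of r P (colour_prods r P g) = g"
proof
  fix p
  show "colouring_of r P (colour_prods r P g) p = g p"
  proof (cases "p \<in> P")
    case True
    note dvd_iff = prime_dvd_colour_prods_iff[OF assms(1,2) True]
    show ?thesis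
    proof (cases "g p")
      case 0
      then have "\<not> (\<exists>j<r. p dvd colour_prods r P g j)"
        using dvd_iff by simp
      then show ?thesis using True 0 by (simp add: colouring_of_def)
    next
      case (Suc i)
      moreover have "g p \<le> r" using PiE_mem[OF assms(3) True] by simp
      ultimately have "i < r" by simp
      then have dvd: "p dvd colour_prods r P g i"
        using dvd_iff Suc by simp
      have "(THE j. j < r \<and> p dvd colour_prods r P g j) = i"
      proof (rule the_equality)
        fix j assume "j < r \<and> p dvd colour_prods r P g j"
        then have "g p = Suc j" using dvd_iff[where i = j] by blast
        then show "j = i" using Suc by simp
      qed (use dvd \<open>i < r\<close> in simp)
      moreover have "\<exists>j<r. p dvd colour_prods r P g j"
        using dvd \<open>i < r\<close> by blast
      ultimately show ?thesis
        using Suc True by (simp add: colouring_of_def)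
    qed
  next
    case False
    then show ?thesis by (simp add: colouring_of_def PiE_arb[OF assms(3) False])
  qed
qed

lemma squarefree_dvd_tuples_entryD:
  assumes "t \<in> squarefree_dvd_tuples r k" "i < r"
  shows "t i dvd k" "squarefree (t i)" "t i \<noteq> 0"
proof -
  have prod: "squarefree (\<Prod>i<r. t i)" "(\<Prod>i<r. t i) dvd k"
    using assms(1) by (simp_all add: squarefree_dvd_tuples_def)
  have "t i dvd (\<Prod>i<r. t i)"
    using assms(2) by (intro dvd_prodI) auto
  then show "t i dvd k" "squarefree (t i)"
    using dvd_trans prod squarefree_mono by blast+
  then show "t i \<noteq> 0" by (metis not_squarefree_0)
qed

lemma squarefree_dvd_tuples_index_unique:
  assumes "t \<in> squarefree_dvd_tuples r k" "prime p" "i < r" "p dvd t i"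
  shows "(THE j. j < r \<and> p dvd t j) = i"
proof (rule the_equality)
  fix j assume "j < r \<and> p dvd t j"
  then show "j = i"
    using assms squarefree_prod_prime_dvd_unique[of t "{..<r}" j i p]
    by (auto simp: squarefree_dvd_tuples_def)
qed (use assms in simp)

lemma colouring_of_eq_Suc_iff:
  assumes "t \<in> squarefree_dvd_tuples r k" "p \<in> prime_factors k" "i < r"
  shows "colouring_of r (prime_factors k) t p = Suc i \<longleftrightarrow> p dvd t i"
proof -
  have "prime p" using assms(2) by auto
  show ?thesis
  proof
    assume "colouring_of r (prime_factors k) t p = Suc i"
    then obtain j where "j < r" "p dvd t j" "(THE j. j < r \<and> p dvd t j) = i"
      using assms(2) by (auto simp: colouring_of_def split: if_splits)
    then show "p dvd t i"
      using squarefree_dvd_tuples_index_unique[OF assms(1) \<open>prime p\<close>] by auto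
  next
    assume "p dvd t i"
    then show "colouring_of r (prime_factors k) t p = Suc i"
      using squarefree_dvd_tuples_index_unique[OF assms(1) \<open>prime p\<close> assms(3)] assms(2,3)
      by (auto simp: colouring_of_def)
  qed
qed

lemma colouring_of_in_PiE:
  assumes "t \<in> squarefree_dvd_tuples r k"
  shows "colouring_of r (prime_factors k) t \<in> prime_factors k \<rightarrow>\<^sub>E {0..r}"
proof -
  have "colouring_of r (prime_factors k) t p \<le> r" if "p \<in> prime_factors k" for p
  proof (cases "\<exists>i<r. p dvd t i")
    case True
    then obtain i where "i < r" "p dvd t i" by blast
    then show ?thesis
      using that colouring_of_eq_Suc_iff[OF assms that \<open>i < r\<close>] by simp
  qed (use that in \<open>auto simp: colouring_of_def\<close>)
  then show ?thesis by (auto simp: colouring_of_def)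
qed

lemma colour_prods_colouring_of:
  assumes "t \<in> squarefree_dvd_tuples r k" "k > 0"
  shows "colour_prods r (prime_factors k) (colouring_of r (prime_factors k) t) = t"
proof (rule PiE_ext)
  show "t \<in> {..<r} \<rightarrow>\<^sub>E UNIV"
    using assms by (simp add: squarefree_dvd_tuples_def)
  fix i assume "i \<in> {..<r}"
  then have "t i dvd k" "squarefree (t i)" "t i \<noteq> 0"
    using squarefree_dvd_tuples_entryD[OF assms(1)] by auto
  have "prime_factors (t i) \<subseteq> prime_factors k"
    using \<open>t i dvd k\<close> assms(2) by (intro dvd_prime_factors) auto
  then have "{p \<in> prime_factors k. colouring_of r (prime_factors k) t p = Suc i} = prime_factors (t i)"
    using colouring_of_eq_Suc_iff[OF assms(1)] \<open>i \<in> {..<r}\<close> \<open>t i \<noteq> 0\<close>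
    by (auto simp: prime_factors_dvd)
  then show "colour_prods r (prime_factors k) (colouring_of r (prime_factors k) t) i = t i"
    using \<open>i \<in> {..<r}\<close> prod_prime_factors_squarefree[OF \<open>squarefree (t i)\<close>]
    by (simp add: colour_prods_def)
qed (simp add: colour_prods_def)

lemma bij_betw_colour_prods:
  assumes "k > 0"
  shows "bij_betw (colour_prods r (prime_factors k))
           (prime_factors k \<rightarrow>\<^sub>E {0..r}) (squarefree_dvd_tuples r k)"
proof (rule bij_betw_byWitness[where f' = "colouring_of r (prime_factors k)"])
  show "\<forall>g \<in> prime_factors k \<rightarrow>\<^sub>E {0..r}.
          colouring_of r (prime_factors k) (colour_prods r (prime_factors k) g) = g"
    by (auto intro: colouring_of_colour_prods)
  show "\<forall>t \<in> squarefree_dvd_tuples r k.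
          colour_prods r (prime_factors k) (colouring_of r (prime_factors k) t) = t"
    using assms colour_prods_colouring_of by blast
  show "colour_prods r (prime_factors k) ` (prime_factors k \<rightarrow>\<^sub>E {0..r}) \<subseteq> squarefree_dvd_tuples r k"
    using assms colour_prods_in_squarefree_dvd_tuples by (auto simp: PiE_iff Pi_iff)
  show "colouring_of r (prime_factors k) ` squarefree_dvd_tuples r k \<subseteq> prime_factors k \<rightarrow>\<^sub>E {0..r}"
    using colouring_of_in_PiE by blast
qed

lemma sum_signs_diff:
  assumes "J \<subseteq> {1..r}"
  shows "(\<Sum>b \<in> {0..r} - J. if b = 0 then 1 else -1 :: 'a::comm_ring_1)
       = 1 - of_nat r + of_nat (card J)"
proof -
  have "finite J" using assms finite_subset by blast
  have "{0..r} - J = insert 0 ({1..r} - J)" using assms by auto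
  then have "(\<Sum>b \<in> {0..r} - J. if b = 0 then 1 else -1 :: 'a) = 1 - of_nat (card ({1..r} - J))"
    by simp
  also have "card ({1..r} - J) = r - card J"
    using assms \<open>finite J\<close> by (simp add: card_Diff_subset)
  also have "card J \<le> r"
    using card_mono[OF _ assms] by simp
  then have "1 - of_nat (r - card J) = (1 - of_nat r + of_nat (card J) :: 'a)"
    by (simp add: of_nat_diff)
  finally show ?thesis .
qed

lemma sum_PiE_prod_signs:
  assumes "finite P" "J \<subseteq> {1..r}"
  shows "(\<Sum>g \<in> P \<rightarrow>\<^sub>E ({0..r} - J). \<Prod>p\<in>P. if g p = 0 then 1 else -1 :: 'a::comm_ring_1)
       = (1 - of_nat r + of_nat (card J)) ^ card P"
proof -
  have "(\<Sum>g \<in> P \<rightarrow>\<^sub>E ({0..r} - J). \<Prod>p\<in>P. if g p = 0 then 1 else -1 :: 'a)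
      = (\<Prod>p\<in>P. \<Sum>b \<in> {0..r} - J. if b = 0 then 1 else -1)"
    by (rule prod_sum_PiE[symmetric]) (use assms(1) in auto)
  then show ?thesis
    by (simp add: sum_signs_diff[OF assms(2)])
qed

lemma moebius_mu_colour_prods:
  assumes "finite P" "\<And>p. p \<in> P \<Longrightarrow> prime p" "g \<in> P \<rightarrow> {0..r}"
  shows "of_int (moebius_mu (\<Prod>i<r. colour_prods r P g i))
       = (\<Prod>p\<in>P. if g p = 0 then 1 else -1 :: 'a::comm_ring_1)"
proof -
  have "moebius_mu (\<Prod>i<r. colour_prods r P g i) = (-1) ^ card {p \<in> P. g p \<noteq> 0}"
    unfolding prod_colour_prods[OF assms(1,3)] using assms(1,2)
    by (intro moebius_mu_prod_primes) auto
  then show ?thesis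
    using assms(1) by (simp add: prod.If_cases Int_def conj_commute)
qed

lemma sum_moebius_dvd_eq_sum_colourings:
  fixes C :: "(nat \<Rightarrow> nat) \<Rightarrow> bool"
  assumes "0 < k" "k \<le> N"
  shows "(\<Sum>t \<in> {..<r} \<rightarrow>\<^sub>E {1..N}. if C t \<and> (\<Prod>i<r. t i) dvd k
            then real_of_int (moebius_mu (\<Prod>i<r. t i)) else 0)
       = (\<Sum>g \<in> prime_factors k \<rightarrow>\<^sub>E {0..r}. if C (colour_prods r (prime_factors k) g)
            then \<Prod>p \<in> prime_factors k. if g p = 0 then 1 else -1 else 0)"
proof -
  let ?P = "prime_factors k"
  let ?F = "\<lambda>t. if C t then real_of_int (moebius_mu (\<Prod>i<r. t i)) else 0"
  have "squarefree_dvd_tuples r k \<subseteq> {..<r} \<rightarrow>\<^sub>E {1..N}"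
  proof
    fix t assume t: "t \<in> squarefree_dvd_tuples r k"
    have "t i \<in> {1..N}" if "i < r" for i
      using squarefree_dvd_tuples_entryD[OF t that] assms dvd_imp_le[of "t i" k] by auto
    then show "t \<in> {..<r} \<rightarrow>\<^sub>E {1..N}"
      using t by (auto simp: squarefree_dvd_tuples_def)
  qed
  then have "(\<Sum>t \<in> {..<r} \<rightarrow>\<^sub>E {1..N}. if C t \<and> (\<Prod>i<r. t i) dvd k
            then real_of_int (moebius_mu (\<Prod>i<r. t i)) else 0)
      = (\<Sum>t \<in> squarefree_dvd_tuples r k. ?F t)"
    by (intro sum.mono_neutral_cong_right)
      (auto simp: squarefree_dvd_tuples_def moebius_mu_def intro!: finite_PiE)
  also have "\<dots> = (\<Sum>g \<in> ?P \<rightarrow>\<^sub>E {0..r}. ?F (colour_prods r ?P g))"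
    using sum.reindex_bij_betw[OF bij_betw_colour_prods[OF assms(1), of r], of ?F] by simp
  also have "\<dots> = (\<Sum>g \<in> ?P \<rightarrow>\<^sub>E {0..r}. if C (colour_prods r ?P g)
            then \<Prod>p \<in> ?P. if g p = 0 then 1 else -1 else 0)"
    using moebius_mu_colour_prods[of ?P _ r] by (intro sum.cong refl) (auto simp: PiE_iff Pi_iff)
  finally show ?thesis .
qed

lemma colour_prods_eq_iff:
  assumes "finite P" "\<And>p. p \<in> P \<Longrightarrow> prime p" "i < r" "j < r" "i \<noteq> j"
  shows "colour_prods r P g i = colour_prods r P g j \<longleftrightarrow> Suc i \<notin> g ` P \<and> Suc j \<notin> g ` P"
proof
  assume eq: "colour_prods r P g i = colour_prods r P g j"
  have "g p \<noteq> Suc i \<and> g p \<noteq> Suc j" if "p \<in> P" for p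
    using prime_dvd_colour_prods_iff[OF assms(1,2) that assms(3), of g]
      prime_dvd_colour_prods_iff[OF assms(1,2) that assms(4), of g] eq assms(5)
    by auto
  then show "Suc i \<notin> g ` P \<and> Suc j \<notin> g ` P" by force
next
  assume "Suc i \<notin> g ` P \<and> Suc j \<notin> g ` P"
  then have "{p \<in> P. g p = Suc i} = {}" "{p \<in> P. g p = Suc j} = {}" by force+
  then show "colour_prods r P g i = colour_prods r P g j"
    using assms(3,4) by (simp add: colour_prods_def del: Collect_empty_eq)
qed

lemma inj_on_colour_prods_iff:
  assumes "finite P" "\<And>p. p \<in> P \<Longrightarrow> prime p"
  shows "inj_on (colour_prods r P g) {..<r} \<longleftrightarrow> card ({1..r} - g ` P) \<le> 1"
proof -
  have "inj_on (colour_prods r P g) {..<r}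
      \<longleftrightarrow> (\<forall>i<r. \<forall>j<r. Suc i \<notin> g ` P \<and> Suc j \<notin> g ` P \<longrightarrow> i = j)"
    using colour_prods_eq_iff[OF assms] unfolding inj_on_def by blast
  also have "\<dots> \<longleftrightarrow> (\<forall>a \<in> {1..r} - g ` P. \<forall>b \<in> {1..r} - g ` P. a = b)"
    unfolding image_Suc_lessThan[symmetric] by blast
  also have "\<dots> \<longleftrightarrow> card ({1..r} - g ` P) \<le> 1"
    using card_le_Suc0_iff_eq[of "{1..r} - g ` P"] by simp
  finally show ?thesis .
qed

lemma sum_signs_inj_colour_prods:
  assumes "finite P" "\<And>p. p \<in> P \<Longrightarrow> prime p"
  shows "(\<Sum>g \<in> P \<rightarrow>\<^sub>E {0..r}. if inj_on (colour_prods r P g) {..<r}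
            then \<Prod>p\<in>P. if g p = 0 then 1 else -1 else 0)
       = (\<Sum>j\<le>r. of_nat (r choose j)
            * ((-1) ^ j * (1 - of_nat j) * (1 - of_nat r + of_nat j) ^ card P) :: 'a::comm_ring_1)"
proof -
  define w :: "(nat \<Rightarrow> nat) \<Rightarrow> 'a" where "w g = (\<Prod>p\<in>P. if g p = 0 then 1 else -1)" for g
  define c :: "nat \<Rightarrow> 'a" where "c j = (-1) ^ j * (1 - of_nat j)" for j
  \<comment> \<open>inclusion-exclusion over the sets \<open>J\<close> of colours left unused by \<open>g\<close>\<close>
  have indicator: "(if inj_on (colour_prods r P g) {..<r} then w g else 0)
      = (\<Sum>J \<in> Pow {1..r}. if J \<inter> g ` P = {} then c (card J) * w g else 0)" for g
  proof -
    have "(\<Sum>J \<in> Pow {1..r}. if J \<inter> g ` P = {} then c (card J) * w g else 0)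
        = (\<Sum>J \<in> {J \<in> Pow {1..r}. J \<inter> g ` P = {}}. c (card J) * w g)"
      by (rule sum.inter_filter[symmetric]) simp
    also have "{J \<in> Pow {1..r}. J \<inter> g ` P = {}} = Pow ({1..r} - g ` P)"
      by auto
    also have "(\<Sum>J \<in> Pow ({1..r} - g ` P). c (card J) * w g)
        = (\<Sum>J \<in> Pow ({1..r} - g ` P). c (card J)) * w g"
      by (rule sum_distrib_right[symmetric])
    also have "\<dots> = (if inj_on (colour_prods r P g) {..<r} then w g else 0)"
      using sum_Pow_alternating_one_minus_card[of "{1..r} - g ` P", where 'a = 'a]
      by (simp add: inj_on_colour_prods_iff[OF assms] c_def)
    finally show ?thesis by simp
  qed
  have avoiding: "(\<Sum>g \<in> P \<rightarrow>\<^sub>E {0..r}. if J \<inter> g ` P = {} then c (card J) * w g else 0)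
      = c (card J) * (1 - of_nat r + of_nat (card J)) ^ card P" if "J \<subseteq> {1..r}" for J
  proof -
    have "{g \<in> P \<rightarrow>\<^sub>E {0..r}. J \<inter> g ` P = {}} = P \<rightarrow>\<^sub>E ({0..r} - J)"
      by (auto simp: PiE_iff extensional_def)
    then show ?thesis
      using assms(1) sum_PiE_prod_signs[OF assms(1) that, where 'a = 'a]
      by (simp add: sum.inter_filter[symmetric] finite_PiE sum_distrib_left[symmetric] w_def)
  qed
  have "(\<Sum>g \<in> P \<rightarrow>\<^sub>E {0..r}. if inj_on (colour_prods r P g) {..<r} then w g else 0)
      = (\<Sum>J \<in> Pow {1..r}. \<Sum>g \<in> P \<rightarrow>\<^sub>E {0..r}. if J \<inter> g ` P = {} then c (card J) * w g else 0)"
    unfolding indicator by (rule sum.swap)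
  also have "\<dots> = (\<Sum>J \<in> Pow {1..r}. c (card J) * (1 - of_nat r + of_nat (card J)) ^ card P)"
    using avoiding by (intro sum.cong) auto
  also have "\<dots> = (\<Sum>j\<le>r. of_nat (r choose j) * (c j * (1 - of_nat r + of_nat j) ^ card P))"
    using sum_Pow_card[of "{1..r}" "\<lambda>j. c j * (1 - of_nat r + of_nat j) ^ card P"] by simp
  finally show ?thesis
    unfolding w_def c_def by (simp add: mult.assoc)
qed

lemma sum_moebius_tuples_dvd:
  assumes "0 < k" "k \<le> N"
  shows "(\<Sum>t \<in> {..<r} \<rightarrow>\<^sub>E {1..N}. if (\<Prod>i<r. t i) dvd k
            then real_of_int (moebius_mu (\<Prod>i<r. t i)) else 0)
       = (1 - real r) ^ omega k"
  using sum_moebius_dvd_eq_sum_colourings[OF assms, of "\<lambda>_. True" r]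
    sum_PiE_prod_signs[of "prime_factors k" "{}" r]
  by (simp add: omega_def)

lemma sum_moebius_inj_tuples_dvd:
  assumes "0 < k" "k \<le> N"
  shows "(\<Sum>t \<in> {..<r} \<rightarrow>\<^sub>E {1..N}. if inj_on t {..<r} \<and> (\<Prod>i<r. t i) dvd k
            then real_of_int (moebius_mu (\<Prod>i<r. t i)) else 0)
       = (\<Sum>j\<le>r. real (r choose j) * ((-1) ^ j * (1 - real j) * (1 - real r + real j) ^ omega k))"
proof -
  have "finite (prime_factors k)" "\<And>p. p \<in> prime_factors k \<Longrightarrow> prime p" by auto
  from sum_signs_inj_colour_prods[OF this, of r] show ?thesis
    using sum_moebius_dvd_eq_sum_colourings[OF assms, of "\<lambda>t. inj_on t {..<r}" r]
    by (simp add: omega_def)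
qed

lemma sum_moebius_floor_eq_sum_dvd:
  fixes C :: "(nat \<Rightarrow> nat) \<Rightarrow> bool"
  assumes "x \<ge> 0"
  shows "(\<Sum>t \<in> {t \<in> {..<r} \<rightarrow>\<^sub>E {1..nat \<lfloor>x\<rfloor>}. C t}.
            real_of_int (moebius_mu (\<Prod>i<r. t i) * \<lfloor>x / real (\<Prod>i<r. t i)\<rfloor>))
       = (\<Sum>k = 1..nat \<lfloor>x\<rfloor>. \<Sum>t \<in> {..<r} \<rightarrow>\<^sub>E {1..nat \<lfloor>x\<rfloor>}.
            if C t \<and> (\<Prod>i<r. t i) dvd k then real_of_int (moebius_mu (\<Prod>i<r. t i)) else 0)"
proof -
  let ?T = "{t \<in> {..<r} \<rightarrow>\<^sub>E {1..nat \<lfloor>x\<rfloor>}. C t}"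
  have "(\<Prod>i<r. t i) > 0" if "t \<in> ?T" for t
    using that PiE_mem[of t "{..<r}" "\<lambda>_. {1..nat \<lfloor>x\<rfloor>}"] by (fastforce intro!: prod_pos)
  then have "(\<Sum>t \<in> ?T. real_of_int (moebius_mu (\<Prod>i<r. t i) * \<lfloor>x / real (\<Prod>i<r. t i)\<rfloor>))
      = (\<Sum>k = 1..nat \<lfloor>x\<rfloor>. \<Sum>t \<in> ?T.
            if (\<Prod>i<r. t i) dvd k then real_of_int (moebius_mu (\<Prod>i<r. t i)) else 0)"
    using sum_floor_divide_eq_sum_multiples[OF _ assms, of ?T "\<lambda>t. \<Prod>i<r. t i"]
    by (simp add: finite_PiE)
  also have "\<dots> = (\<Sum>k = 1..nat \<lfloor>x\<rfloor>. \<Sum>t \<in> {..<r} \<rightarrow>\<^sub>E {1..nat \<lfloor>x\<rfloor>}.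
            if C t \<and> (\<Prod>i<r. t i) dvd k then real_of_int (moebius_mu (\<Prod>i<r. t i)) else 0)"
    by (simp add: sum.inter_filter finite_PiE if_if_eq_conj)
  finally show ?thesis .
qed

lemma omega_eq_0_iff:
  assumes "m > 0"
  shows "omega m = 0 \<longleftrightarrow> m = 1"
  using assms prime_factorization_empty_iff[of m] by (auto simp: omega_def)

lemma sum_zero_power_omega:
  assumes "N \<ge> 1"
  shows "(\<Sum>m = 1..N. (0::'a::comm_semiring_1) ^ omega m) = 1"
proof -
  have "(\<Sum>m = 1..N. (0::'a) ^ omega m) = (\<Sum>m = 1..N. if m = 1 then 1 else 0)"
  proof (intro sum.cong refl)
    fix m :: nat assume "m \<in> {1..N}"
    then have "omega m = 0 \<longleftrightarrow> m = 1" by (intro omega_eq_0_iff) auto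
    then show "(0::'a) ^ omega m = (if m = 1 then 1 else 0)" by (simp add: power_0_left)
  qed
  then show ?thesis using assms by simp
qed

lemma sum_atMost_split_ends:
  fixes c :: "nat \<Rightarrow> 'a::comm_monoid_add"
  assumes "2 \<le> r" "c 1 = 0"
  shows "(\<Sum>j\<le>r. c j) = c 0 + (\<Sum>j = 2..r - 2. c j) + c (r - 1) + c r"
proof -
  obtain m where m: "r = m + 2" using assms(1) by (metis add.commute le_Suc_ex)
  have "(\<Sum>j\<le>m. c j) = c 0 + (\<Sum>j = 2..m. c j)"
  proof (cases m)
    case (Suc n)
    then have "{..m} = insert 0 (insert 1 {2..m})" by auto
    then show ?thesis using assms(2) by simp
  qed simp
  then show ?thesis by (simp add: m add.assoc)
qed

lemma sum_moebius_floor_tuples: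
  assumes "x \<ge> 0"
  shows "(\<Sum>t \<in> {..<r} \<rightarrow>\<^sub>E {1..nat \<lfloor>x\<rfloor>}.
            real_of_int (moebius_mu (\<Prod>i<r. t i) * \<lfloor>x / real (\<Prod>i<r. t i)\<rfloor>))
       = (\<Sum>m = 1..nat \<lfloor>x\<rfloor>. (1 - real r) ^ omega m)"
  using sum_moebius_floor_eq_sum_dvd[OF assms, of r "\<lambda>_. True"] sum_moebius_tuples_dvd
  by simp

lemma sum_moebius_floor_strict_mono_tuples:
  assumes "x \<ge> 0"
  shows "(\<Sum>t \<in> {t \<in> {..<r} \<rightarrow>\<^sub>E {1..nat \<lfloor>x\<rfloor>}. strict_mono_on {..<r} t}.
            real_of_int (moebius_mu (\<Prod>i<r. t i) * \<lfloor>x / real (\<Prod>i<r. t i)\<rfloor>))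
       = (\<Sum>j\<le>r. (-1) ^ j * (1 - real j) * real (r choose j)
            * (\<Sum>m = 1..nat \<lfloor>x\<rfloor>. (1 - real r + real j) ^ omega m)) / fact r"
proof -
  let ?F = "\<lambda>t. real_of_int (moebius_mu (\<Prod>i<r. t i) * \<lfloor>x / real (\<Prod>i<r. t i)\<rfloor>)"
  have "fact r * (\<Sum>t \<in> {t \<in> {..<r} \<rightarrow>\<^sub>E {1..nat \<lfloor>x\<rfloor>}. strict_mono_on {..<r} t}. ?F t)
      = (\<Sum>t \<in> {t \<in> {..<r} \<rightarrow>\<^sub>E {1..nat \<lfloor>x\<rfloor>}. inj_on t {..<r}}. ?F t)"
  proof (rule sum_inj_tuples_eq_fact_sum_strict_mono[symmetric])
    fix t :: "nat \<Rightarrow> nat" and p assume "p permutes {..<r}"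
    then have "(\<Prod>i<r. (t \<circ> p) i) = (\<Prod>i<r. t i)"
      using prod.permute[of p "{..<r}" t] by simp
    then show "?F (t \<circ> p) = ?F t" by (simp only:)
  qed
  also have "\<dots> = (\<Sum>k = 1..nat \<lfloor>x\<rfloor>. \<Sum>j\<le>r. real (r choose j)
            * ((-1) ^ j * (1 - real j) * (1 - real r + real j) ^ omega k))"
    unfolding sum_moebius_floor_eq_sum_dvd[OF assms]
    by (intro sum.cong refl sum_moebius_inj_tuples_dvd) auto
  also have "\<dots> = (\<Sum>j\<le>r. (-1) ^ j * (1 - real j) * real (r choose j)
            * (\<Sum>m = 1..nat \<lfloor>x\<rfloor>. (1 - real r + real j) ^ omega m))"
    by (subst sum.swap) (simp add: sum_distrib_left mult_ac)
  finally show ?thesis by (simp add: field_simps)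
qed

lemma sum_binomial_omega_powers_split:
  assumes "r \<ge> 2" "N \<ge> 1"
  shows "(\<Sum>j\<le>r. (-1) ^ j * (1 - real j) * real (r choose j)
            * (\<Sum>m = 1..N. (1 - real r + real j) ^ omega m))
       = (\<Sum>m = 1..N. (1 - real r) ^ omega m)
         - (\<Sum>j = 2..r - 2. (-1) ^ j * (real j - 1) * real (r choose j)
              * (\<Sum>m = 1..N. (1 - real r + real j) ^ omega m))
         + (-1) ^ r * (real r - 2) * real r - (-1) ^ r * (real r - 1) * real N"
proof -
  define c where "c j = (-1) ^ j * (1 - real j) * real (r choose j)
    * (\<Sum>m = 1..N. (1 - real r + real j) ^ omega m)" for j
  obtain m where m: "r = m + 2" using assms(1) by (metis add.commute le_Suc_ex)
  have "(\<Sum>j\<le>r. c j) = c 0 + (\<Sum>j = 2..r - 2. c j) + c (r - 1) + c r"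
    by (rule sum_atMost_split_ends) (simp_all add: assms(1) c_def)
  moreover have "c (r - 1) = (-1) ^ r * (real r - 2) * real r"
    using sum_zero_power_omega[OF assms(2), where 'a = real] by (simp add: c_def m algebra_simps)
  moreover have "c r = - ((-1) ^ r * (real r - 1) * real N)"
    by (simp add: c_def m algebra_simps)
  moreover have "(\<Sum>j = 2..r - 2. c j) = - (\<Sum>j = 2..r - 2. (-1) ^ j * (real j - 1)
      * real (r choose j) * (\<Sum>m = 1..N. (1 - real r + real j) ^ omega m))"
    by (simp add: c_def sum_negf[symmetric] algebra_simps)
  ultimately show ?thesis by (simp add: c_def)
qed

theorem lemma3p6:
  fixes r :: nat and x :: real
  assumes "r \<ge> 2" and "x \<ge> 1"
  shows "(\<Sum>n \<in> {n \<in> {..<r} \<rightarrow>\<^sub>E {1..nat \<lfloor>x\<rfloor>}. strict_mono_on {..<r} n}.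
            real_of_int (moebius_mu (\<Prod>i<r. n i) * \<lfloor>x / real (\<Prod>i<r. n i)\<rfloor>))
       = (1 / fact r) * (\<Sum>n \<in> {..<r} \<rightarrow>\<^sub>E {1..nat \<lfloor>x\<rfloor>}.
            real_of_int (moebius_mu (\<Prod>i<r. n i) * \<lfloor>x / real (\<Prod>i<r. n i)\<rfloor>))
         - (1 / fact r) * (\<Sum>j = 2..r - 2. (-1) ^ j * (real j - 1) * real (r choose j)
              * (\<Sum>m = 1..nat \<lfloor>x\<rfloor>. (1 - real r + real j) ^ omega m))
         - (-1) ^ r * real_of_int \<lfloor>x\<rfloor> / (real r * fact (r - 2))
         + (-1) ^ r * (real r - 2) / fact (r - 1)"
proof -
  define N where "N = nat \<lfloor>x\<rfloor>"
  \<comment> \<open>naming \<open>r - 1\<close> lets \<open>field_simps\<close> use it as an atomic nonzero denominator\<close>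
  define q where "q = real r - 1"
  obtain m where m: "r = m + 2" using assms(1) by (metis add.commute le_Suc_ex)
  have "N \<ge> 1" and floor_x: "real_of_int \<lfloor>x\<rfloor> = real N"
    using assms(2) by (auto simp: N_def le_nat_iff)
  have facts: "fact r = real r * q * fact (r - 2)" "fact (r - 1) = q * fact (r - 2)"
    by (simp_all add: q_def m)
  have field_identity: "(A - S + s * (R - 2) * R - s * Q * M) / (R * Q * F)
      = 1 / (R * Q * F) * A - 1 / (R * Q * F) * S - s * M / (R * F) + s * (R - 2) / (Q * F)"
    if "R \<noteq> 0" "Q \<noteq> 0" "F \<noteq> 0" for A S s R Q M F :: real
    using that by (simp add: field_simps)
  have "x \<ge> 0" using assms(2) by simp
  show ?thesis
    unfolding sum_moebius_floor_strict_mono_tuples[OF \<open>x \<ge> 0\<close>]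
      sum_moebius_floor_tuples[OF \<open>x \<ge> 0\<close>]
    unfolding N_def[symmetric] sum_binomial_omega_powers_split[OF assms(1) \<open>N \<ge> 1\<close>]
      floor_x q_def[symmetric] facts
    by (rule field_identity) (use assms in \<open>auto simp: q_def\<close>)
qed

end
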